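(* In the inverse active sensing setting described in the context, restrict to Bayes-optimal strategies ($\kappa=*$) and assume the priors $\mathbb{P}\{\eta\mid *\}$ and $\mathbb{P}\{\rho\}$ are differentiable. Then the posterior $\mathbb{P}\{\eta,\rho\mid *,\mathcal{D}\}\propto\mathbb{P}\{\eta\mid*\}\mathbb{P}\{\rho\}\prod_{n=1}^N\prod_{t=0}^{\tau_n-1}\pi^*_\rho(\tilde\lambda_{n,t}\mid\mu_{n,t},\nu_{n,t};\eta)$ is differentiable in $(\eta,\rho)$ almost everywhere.
   Context: Timely decision problem: finite sets $\Theta,\Lambda,\Omega$; known distributions $q_{\theta,\lambda}$ on $\Omega$ and $p_{\theta,\lambda}\in(0,1)$. Latent $\theta\sim\mu_0$; survival $\nu_0=1$; at each time $t$ with $\nu_t=1$ the agent chooses either a decision $\hat\theta\in\Theta$ (stopping, time $\sigma$) or an acquisition $\lambda_t\in\Lambda$, after which, given $\theta$, $\nu_{t+1}=0$ w.p. $p_{\theta,\lambda_t}$, else $\nu_{t+1}=1$ and $\omega_{t+1}\sim q_{\theta,\lambda_t}$ is observed. Deadline $\delta=\min\{t:\nu_t=0\}$, $\tau=\min\{\delta,\sigma\}$. Posterior updates $M(\lambda,\mu,\omega)(\theta)\propto(1-p_{\theta,\lambda})q_{\theta,\lambda}(\omega)\mu(\theta)$, $\bar M(\lambda,\mu)(\theta)\propto p_{\theta,\lambda}\mu(\theta)$. Costs $c_\lambda>0$; preferences $\eta=(\eta_a,\eta_b,\eta_c)\in\mathcal H=\mathbb{R}^d$ with $\eta_a,\eta_b$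 indexed by $\Theta$ and $\eta_c$ by $\Lambda$. Loss $\ell=\sum_{\theta'}\eta_{a,\theta'}\mathbf 1\{\theta=\theta',\theta\ne\hat\theta,\tau<\delta\}+\sum_{\theta'}\eta_{b,\theta'}\mathbf 1\{\theta=\theta',\tau=\delta\}+\sum_{t<\tau}\eta_{c,\lambda_t}c_{\lambda_t}$; $V^*(\mu,\nu;\eta)$ is the optimal expected to-go loss. Decision factors $\bar Q_{\hat\theta}(\mu,\nu;\eta)=(1-\nu)\sum_{\theta'}\eta_{b,\theta'}\mu(\theta')+\nu\sum_{\theta'\ne\hat\theta}\eta_{a,\theta'}\mu(\theta')$; optimal acquisition factors $Q^*_\lambda(\mu,\nu;\eta)=(1-\nu)V^*(\mu,0;\eta)+\eta_{c,\lambda}c_\lambda+\nu\big(V^*(\bar M(\lambda,\mu),0;\eta)\sum_{\theta'}p_{\theta',\lambda}\mu(\theta')+\sum_\omega V^*(M(\lambda,\mu,\omega),1;\eta)\sum_{\theta'}(1-p_{\theta',\lambda})q_{\theta',\lambda}(\omega)\mu(\theta')\big)$. Writing $\tilde Q^*_{\tilde\lambda}$ for $Q^*_{\tilde\lambda}$ ($\tilde\lambda\in\Lambda$) or $\bar Q_{\tilde\lambda}$ ($\tilde\lambda\in\Theta$), the Bayes-optimal Boltzmann strategy with inverse temperature $\rho$ is $\pi^*_\rho(\tilde\lambda\mid\mu,\nu;\eta)=\exp(-\rho\tilde Q^*_{\tilde\lambda}(\mu,\nu;\eta))/\sum_{\tilde\lambda'\in\Lambda\cup\Theta}\exp(-\rho\tilde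 Q^*_{\tilde\lambda'}(\mu,\nu;\eta))$. Data $\mathcal D=\{(\tilde\lambda_{n,t},\tilde\omega_{n,t+1})_{t=0}^{\tau_n-1}\}_{n=1}^N$: observed choices $\tilde\lambda_{n,t}\in\Lambda\cup\Theta$ and outcomes of $N$ episodes; $\mu_{n,t}$ is computed recursively from the known episode prior $\mu_{n,0}$ via $M$, and $\nu_{n,t}=1$ prior to stopping. *)

theory Defs
  imports "HOL-Analysis.Analysis"
begin

(* Finite sets Theta, Lambda, Omega are finite types 'th, 'la, 'om.
   p th l = p_{theta,lambda};  q th l w = q_{theta,lambda}(w);  c l = c_lambda.
   Choices in Lambda \<union> Theta are the sum type 'la + 'th
   (Inl l = acquisition l, Inr th = decision th). *)

type_synonym ('th, 'la) pref = "(real^'th) \<times> (real^'th) \<times> (real^'la)"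

definition eta_a :: "('th, 'la) pref \<Rightarrow> 'th::finite \<Rightarrow> real" where
  "eta_a \<eta> th = fst \<eta> $ th"
definition eta_b :: "('th, 'la) pref \<Rightarrow> 'th::finite \<Rightarrow> real" where
  "eta_b \<eta> th = fst (snd \<eta>) $ th"
definition eta_c :: "('th, 'la) pref \<Rightarrow> 'la::finite \<Rightarrow> real" where
  "eta_c \<eta> l = snd (snd \<eta>) $ l"

definition is_dist :: "('a::finite \<Rightarrow> real) \<Rightarrow> bool" where
  "is_dist \<mu> \<longleftrightarrow> (\<forall>x. 0 \<le> \<mu> x) \<and> (\<Sum>x\<in>UNIV. \<mu> x) = 1"

definition Mupd :: "('th::finite \<Rightarrow> 'la \<Rightarrow> real) \<Rightarrow> ('th \<Rightarrow> 'la \<Rightarrow> 'om \<Rightarrow> real)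
    \<Rightarrow> 'la \<Rightarrow> ('th \<Rightarrow> real) \<Rightarrow> 'om \<Rightarrow> ('th \<Rightarrow> real)" where
  "Mupd p q l \<mu> w = (\<lambda>th. (1 - p th l) * q th l w * \<mu> th /
      (\<Sum>th'\<in>UNIV. (1 - p th' l) * q th' l w * \<mu> th'))"

definition Mbar :: "('th::finite \<Rightarrow> 'la \<Rightarrow> real) \<Rightarrow> 'la \<Rightarrow> ('th \<Rightarrow> real) \<Rightarrow> ('th \<Rightarrow> real)" where
  "Mbar p l \<mu> = (\<lambda>th. p th l * \<mu> th / (\<Sum>th'\<in>UNIV. p th' l * \<mu> th'))"

(* optimal to-go loss after the deadline has passed (nu = 0) *)
definition V0 :: "('th, 'la) pref \<Rightarrow> ('th::finite \<Rightarrow> real) \<Rightarrow> real" where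
  "V0 \<eta> \<mu> = (\<Sum>th\<in>UNIV. eta_b \<eta> th * \<mu> th)"

definition Qbar :: "('th, 'la::finite) pref \<Rightarrow> 'th::finite \<Rightarrow> ('th \<Rightarrow> real) \<Rightarrow> real \<Rightarrow> real" where
  "Qbar \<eta> thh \<mu> \<nu> = (1 - \<nu>) * (\<Sum>th\<in>UNIV. eta_b \<eta> th * \<mu> th)
      + \<nu> * (\<Sum>th\<in>UNIV - {thh}. eta_a \<eta> th * \<mu> th)"

(* acquisition factor, given a candidate value function W1 for nu = 1 *)
definition Qacq :: "('th::finite \<Rightarrow> 'la::finite \<Rightarrow> real) \<Rightarrow> ('th \<Rightarrow> 'la \<Rightarrow> 'om::finite \<Rightarrow> real)
    \<Rightarrow> ('la \<Rightarrow> real) \<Rightarrow> ('th, 'la) pref \<Rightarrow> (('th \<Rightarrow> real) \<Rightarrow> real)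
    \<Rightarrow> 'la \<Rightarrow> ('th \<Rightarrow> real) \<Rightarrow> real \<Rightarrow> real" where
  "Qacq p q c \<eta> W1 l \<mu> \<nu> = (1 - \<nu>) * V0 \<eta> \<mu> + eta_c \<eta> l * c l
     + \<nu> * (V0 \<eta> (Mbar p l \<mu>) * (\<Sum>th\<in>UNIV. p th l * \<mu> th)
           + (\<Sum>w\<in>UNIV. W1 (Mupd p q l \<mu> w) * (\<Sum>th\<in>UNIV. (1 - p th l) * q th l w * \<mu> th)))"

definition bellman :: "('th::finite \<Rightarrow> 'la::finite \<Rightarrow> real) \<Rightarrow> ('th \<Rightarrow> 'la \<Rightarrow> 'om::finite \<Rightarrow> real)
    \<Rightarrow> ('la \<Rightarrow> real) \<Rightarrow> ('th, 'la) pref \<Rightarrow> (('th \<Rightarrow> real) \<Rightarrow> real)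
    \<Rightarrow> ('th \<Rightarrow> real) \<Rightarrow> real" where
  "bellman p q c \<eta> W1 \<mu> = min (Min (range (\<lambda>thh. Qbar \<eta> thh \<mu> 1)))
                               (Min (range (\<lambda>l. Qacq p q c \<eta> W1 l \<mu> 1)))"

definition Vstar1 :: "('th::finite \<Rightarrow> 'la::finite \<Rightarrow> real) \<Rightarrow> ('th \<Rightarrow> 'la \<Rightarrow> 'om::finite \<Rightarrow> real)
    \<Rightarrow> ('la \<Rightarrow> real) \<Rightarrow> ('th, 'la) pref \<Rightarrow> ('th \<Rightarrow> real) \<Rightarrow> real" where
  "Vstar1 p q c \<eta> = (THE W. (\<forall>\<mu>. is_dist \<mu> \<longrightarrow> W \<mu> = bellman p q c \<eta> W \<mu>)
                          \<and> (\<forall>\<mu>. \<not> is_dist \<mu> \<longrightarrow> W \<mu> = 0)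
                          \<and> (\<exists>B. \<forall>\<mu>. \<bar>W \<mu>\<bar> \<le> B))"

definition Qstar :: "('th::finite \<Rightarrow> 'la::finite \<Rightarrow> real) \<Rightarrow> ('th \<Rightarrow> 'la \<Rightarrow> 'om::finite \<Rightarrow> real)
    \<Rightarrow> ('la \<Rightarrow> real) \<Rightarrow> ('th, 'la) pref \<Rightarrow> 'la \<Rightarrow> ('th \<Rightarrow> real) \<Rightarrow> real \<Rightarrow> real" where
  "Qstar p q c \<eta> l \<mu> \<nu> = Qacq p q c \<eta> (Vstar1 p q c \<eta>) l \<mu> \<nu>"

definition Qtilde :: "('th::finite \<Rightarrow> 'la::finite \<Rightarrow> real) \<Rightarrow> ('th \<Rightarrow> 'la \<Rightarrow> 'om::finite \<Rightarrow> real)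
    \<Rightarrow> ('la \<Rightarrow> real) \<Rightarrow> ('th, 'la) pref \<Rightarrow> 'la + 'th \<Rightarrow> ('th \<Rightarrow> real) \<Rightarrow> real \<Rightarrow> real" where
  "Qtilde p q c \<eta> a \<mu> \<nu> = (case a of Inl l \<Rightarrow> Qstar p q c \<eta> l \<mu> \<nu> | Inr thh \<Rightarrow> Qbar \<eta> thh \<mu> \<nu>)"

definition boltz :: "('th::finite \<Rightarrow> 'la::finite \<Rightarrow> real) \<Rightarrow> ('th \<Rightarrow> 'la \<Rightarrow> 'om::finite \<Rightarrow> real)
    \<Rightarrow> ('la \<Rightarrow> real) \<Rightarrow> ('th, 'la) pref \<Rightarrow> real \<Rightarrow> 'la + 'th \<Rightarrow> ('th \<Rightarrow> real) \<Rightarrow> real \<Rightarrow> real" where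
  "boltz p q c \<eta> \<rho> a \<mu> \<nu> = exp (- \<rho> * Qtilde p q c \<eta> a \<mu> \<nu>)
      / (\<Sum>b\<in>UNIV. exp (- \<rho> * Qtilde p q c \<eta> b \<mu> \<nu>))"

(* belief after processing a prefix of an episode: acquisitions update via M with the observed
   outcome; (decisions only occur at the last step and are never processed) *)
fun belief :: "('th::finite \<Rightarrow> 'la \<Rightarrow> real) \<Rightarrow> ('th \<Rightarrow> 'la \<Rightarrow> 'om \<Rightarrow> real)
    \<Rightarrow> ('th \<Rightarrow> real) \<Rightarrow> (('la + 'th) \<times> 'om) list \<Rightarrow> ('th \<Rightarrow> real)" where
  "belief p q \<mu> [] = \<mu>"
| "belief p q \<mu> ((a, w) # xs) =
     belief p q (case a of Inl l \<Rightarrow> Mupd p q l \<mu> w | Inr _ \<Rightarrow> \<mu>) xs"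

(* An episode: (mu_{n,0}, [(tilde lambda_{n,t}, tilde omega_{n,t+1}) for t < tau_n]).
   The outcome component of the last step is irrelevant. *)
type_synonym ('th, 'la, 'om) episode = "('th \<Rightarrow> real) \<times> (('la + 'th) \<times> 'om) list"

definition wf_episode :: "('th::finite, 'la::finite, 'om) episode \<Rightarrow> bool" where
  "wf_episode e \<longleftrightarrow> is_dist (fst e) \<and>
     (\<forall>t. t + 1 < length (snd e) \<longrightarrow> (\<exists>l. fst (snd e ! t) = Inl l))"

definition likelihood :: "('th::finite \<Rightarrow> 'la::finite \<Rightarrow> real) \<Rightarrow> ('th \<Rightarrow> 'la \<Rightarrow> 'om::finite \<Rightarrow> real)
    \<Rightarrow> ('la \<Rightarrow> real) \<Rightarrow> ('th, 'la, 'om) episode list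
    \<Rightarrow> ('th, 'la) pref \<Rightarrow> real \<Rightarrow> real" where
  "likelihood p q c D \<eta> \<rho> =
     (\<Prod>n<length D. \<Prod>t<length (snd (D ! n)).
        boltz p q c \<eta> \<rho> (fst (snd (D ! n) ! t))
              (belief p q (fst (D ! n)) (take t (snd (D ! n)))) 1)"

definition unnorm_posterior :: "('th::finite \<Rightarrow> 'la::finite \<Rightarrow> real) \<Rightarrow> ('th \<Rightarrow> 'la \<Rightarrow> 'om::finite \<Rightarrow> real)
    \<Rightarrow> ('la \<Rightarrow> real) \<Rightarrow> (('th, 'la) pref \<Rightarrow> real) \<Rightarrow> (real \<Rightarrow> real)
    \<Rightarrow> ('th, 'la, 'om) episode list \<Rightarrow> (('th, 'la) pref) \<times> real \<Rightarrow> real" where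
  "unnorm_posterior p q c prior_eta prior_rho D x =
     prior_eta (fst x) * prior_rho (snd x) * likelihood p q c D (fst x) (snd x)"

end

theory Submission
  imports Defs
begin

text \<open>
  Every factor of the likelihood is a smooth expression (exponentials, finite sums and products,
  a quotient with positive denominator) in \<open>\<rho>\<close> and in the factors \<open>Qtilde\<close> at the observed
  beliefs. Each such factor is concave in \<open>\<eta>\<close>: decision factors and the immediate part of an
  acquisition factor are linear in \<open>\<eta>\<close>, and \<open>V*(\<mu>, 1; \<eta>)\<close> is the pointwise limit of value
  iteration, every iterate being a minimum of concave functions. Value iteration converges to the
  unique bounded solution of the Bellman equation because the Bellman operator contracts the sup
  norm by the factor \<open>1 - min p < 1\<close>.

  A convex function on a Euclidean space is differentiable almost everywhere: on each line it has
  only countably many kinks, so by Tonelli the points with a kink in some coordinate direction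
  form a null set, and where all partial derivatives exist convexity already gives
  differentiability. Only countably many factors occur, so off a null set all of them, and hence
  the posterior, are differentiable.
\<close>

section \<open>Convex functions of one real variable\<close>

definition diff_quot :: "(real \<Rightarrow> real) \<Rightarrow> real \<Rightarrow> real \<Rightarrow> real" where
  "diff_quot \<phi> t h = (\<phi> (t + h) - \<phi> t) / h"

text \<open>For convex \<open>\<phi>\<close>, \<open>kink \<phi> t\<close> says that the left derivative at \<open>t\<close> is smaller than the right one.\<close>

definition kink :: "(real \<Rightarrow> real) \<Rightarrow> real \<Rightarrow> bool" where
  "kink \<phi> t \<longleftrightarrow>
     (\<exists>r1 r2. r1 < r2 \<and> (\<forall>h<0. diff_quot \<phi> t h \<le> r1) \<and> (\<forall>h>0. r2 \<le> diff_quot \<phi> t h))"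

lemma diff_quot_swap: "diff_quot \<phi> a (b - a) = diff_quot \<phi> b (a - b)"
  unfolding diff_quot_def by (metis add_diff_cancel_left' diff_add_cancel minus_diff_eq minus_divide_divide)

lemma kink_shift: "kink (\<lambda>s. \<phi> (t + s)) 0 \<longleftrightarrow> kink \<phi> t"
  by (simp add: kink_def diff_quot_def)

lemma convex_on_diff_quot_mono:
  assumes cv: "convex_on UNIV \<phi>" and h: "h1 < h2" "h1 \<noteq> 0" "h2 \<noteq> 0"
  shows "diff_quot \<phi> t h1 \<le> diff_quot \<phi> t h2"
proof -
  note slope = convex_on_slope_le[OF cv UNIV_I UNIV_I]
  consider "h1 < h2 \<and> h2 < 0" | "h1 < 0 \<and> 0 < h2" | "0 < h1 \<and> h1 < h2"
    using h by linarith
  then show ?thesis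
  proof cases
    case 1
    then show ?thesis
      using slope(2)[of "t + h1" "t + h2" t] by (simp add: diff_quot_def)
  next
    case 2
    then show ?thesis
      using slope[of "t + h1" t "t + h2"] by (simp add: diff_quot_def minus_divide_left)
  next
    case 3
    then show ?thesis
      using slope(1)[of t "t + h1" "t + h2"] by (simp add: diff_quot_def divide_simps algebra_simps)
  qed
qed

lemma kink_iff_rational:
  "kink \<phi> t \<longleftrightarrow>
     (\<exists>r1\<in>\<rat>. \<exists>r2\<in>\<rat>. r1 < r2 \<and> (\<forall>h<0. diff_quot \<phi> t h \<le> r1) \<and> (\<forall>h>0. r2 \<le> diff_quot \<phi> t h))"
proof
  assume "kink \<phi> t"
  then obtain r1 r2 where r: "r1 < r2" "\<forall>h<0. diff_quot \<phi> t h \<le> r1" "\<forall>h>0. r2 \<le> diff_quot \<phi> t h"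
    unfolding kink_def by blast
  obtain a where a: "a \<in> \<rat>" "r1 < a" "a < r2"
    using Rats_dense_in_real[OF r(1)] by blast
  obtain b where b: "b \<in> \<rat>" "a < b" "b < r2"
    using Rats_dense_in_real[OF a(3)] by blast
  have "\<forall>h<0. diff_quot \<phi> t h \<le> a" "\<forall>h>0. b \<le> diff_quot \<phi> t h"
    using r a(2) b(3) by force+
  then show "\<exists>r1\<in>\<rat>. \<exists>r2\<in>\<rat>. r1 < r2 \<and>
      (\<forall>h<0. diff_quot \<phi> t h \<le> r1) \<and> (\<forall>h>0. r2 \<le> diff_quot \<phi> t h)"
    using a(1) b(1,2) by blast
qed (auto simp: kink_def)

lemma convex_on_countable_kinks:
  assumes cv: "convex_on UNIV \<phi>"
  shows "countable {t. kink \<phi> t}"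
proof -
  define separates where
    "separates r t \<longleftrightarrow> (\<forall>h<0. diff_quot \<phi> t h < r) \<and> (\<forall>h>0. r < diff_quot \<phi> t h)" for r t
  txt \<open>Two kinks cannot share a separating slope \<open>r\<close>: the chord between them would have
    slope both above and below \<open>r\<close>.\<close>
  have no_pair: False if "a < b" "separates r a" "separates r b" for r a b
  proof -
    have "r < diff_quot \<phi> a (b - a)" "diff_quot \<phi> b (a - b) < r"
      using that unfolding separates_def by auto
    then show False
      using diff_quot_swap[of \<phi> a b] by simp
  qed
  have unique: "a = b" if "separates r a" "separates r b" for r a b
    using no_pair[of a b r] no_pair[of b a r] that by (cases a b rule: linorder_cases) auto
  have "countable {t. separates r t}" for r
    by (rule countable_subset[of _ "{SOME t. separates r t}"]) (auto intro: unique someI)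
  then have "countable (\<Union>r\<in>\<rat>. {t. separates r t})"
    by (intro countable_UN countable_rat)
  moreover have "{t. kink \<phi> t} \<subseteq> (\<Union>r\<in>\<rat>. {t. separates r t})"
  proof
    fix t assume "t \<in> {t. kink \<phi> t}"
    then obtain r1 r2 where r: "r1 < r2" "\<forall>h<0. diff_quot \<phi> t h \<le> r1" "\<forall>h>0. r2 \<le> diff_quot \<phi> t h"
      unfolding kink_def by blast
    obtain r where "r \<in> \<rat>" "r1 < r" "r < r2"
      using Rats_dense_in_real[OF r(1)] by blast
    moreover have "separates r t"
      unfolding separates_def using r \<open>r1 < r\<close> \<open>r < r2\<close> by force
    ultimately show "t \<in> (\<Union>r\<in>\<rat>. {t. separates r t})"
      by blast
  qed
  ultimately show ?thesis
    by (rule countable_subset[rotated])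
qed

lemma convex_on_differentiable_if_not_kink:
  assumes cv: "convex_on UNIV \<phi>" and smooth: "\<not> kink \<phi> t"
  shows "\<phi> differentiable (at t)"
proof -
  let ?L = "Sup (diff_quot \<phi> t ` {..<0})" and ?R = "Inf (diff_quot \<phi> t ` {0<..})"
  have mono: "diff_quot \<phi> t a \<le> diff_quot \<phi> t b" if "a \<le> b" "a \<noteq> 0" "b \<noteq> 0" for a b
    using that convex_on_diff_quot_mono[OF cv, of a b t] by (cases "a = b") auto
  have left: "(diff_quot \<phi> t \<longlongrightarrow> ?L) (at_left 0)"
    using Lim_left_bound[of UNIV 0 "diff_quot \<phi> t" "diff_quot \<phi> t 1"] mono by simp
  have right: "(diff_quot \<phi> t \<longlongrightarrow> ?R) (at_right 0)"
    using Lim_right_bound[of UNIV 0 "diff_quot \<phi> t" "diff_quot \<phi> t (-1)"] mono by simp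
  have le_L: "diff_quot \<phi> t h \<le> ?L" if "h < 0" for h
    using that by (intro cSup_upper bdd_aboveI[of _ "diff_quot \<phi> t 1"]) (auto intro!: mono)
  have R_le: "?R \<le> diff_quot \<phi> t h" if "h > 0" for h
    using that by (intro cInf_lower bdd_belowI[of _ "diff_quot \<phi> t (-1)"]) (auto intro!: mono)
  have "?L \<le> ?R"
    using mono by (intro cSup_least cInf_greatest) auto
  moreover have "\<not> ?L < ?R"
    using smooth le_L R_le unfolding kink_def by blast
  ultimately have "(diff_quot \<phi> t \<longlongrightarrow> ?R) (at 0)"
    using left right by (intro filterlim_split_at) auto
  then have "(\<phi> has_real_derivative ?R) (at t)"
    by (simp add: DERIV_def diff_quot_def[abs_def])
  then show ?thesis
    using real_differentiable_def by blast
qed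

section \<open>Almost-everywhere differentiability of convex functions\<close>

lemma null_sets_lborel_if_null_on_lines:
  fixes S :: "'a::euclidean_space set" and v :: 'a
  assumes S: "S \<in> sets borel"
    and lines: "\<And>x. {t::real. x + t *\<^sub>R v \<in> S} \<in> null_sets lborel"
  shows "S \<in> null_sets lborel"
proof -
  txt \<open>By Tonelli, the measure of \<open>G\<close> is computed once from its \<open>t\<close>-sections, which are
    translates of \<open>S\<close>, and once from its \<open>y\<close>-sections, which lie on null lines.\<close>
  define G :: "(real \<times> 'a) set" where "G = {(t, y). t \<in> {0..1} \<and> y + t *\<^sub>R v \<in> S}"
  have "G = (\<lambda>p. (fst p, snd p + fst p *\<^sub>R v)) -` ({0..1} \<times> S)"
    by (auto simp: G_def)
  moreover have "(\<lambda>p. (fst p, snd p + fst p *\<^sub>R v)) \<in> borel_measurable (borel :: (real \<times> 'a) measure)"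
    by (intro borel_measurable_continuous_onI continuous_intros)
  moreover have "{0..1} \<times> S \<in> sets (borel :: (real \<times> 'a) measure)"
    using S by (simp add: borel_prod[symmetric])
  ultimately have "G \<in> sets (borel :: (real \<times> 'a) measure)"
    by (simp add: measurable_sets_borel)
  then have G: "G \<in> sets (lborel \<Otimes>\<^sub>M lborel)"
    by (simp only: lborel_prod sets_lborel)
  have translate: "emeasure lborel {y. y + t *\<^sub>R v \<in> S} = emeasure lborel S" for t
  proof -
    have "emeasure lborel S = emeasure (distr lborel borel ((+) (t *\<^sub>R v))) S"
      by (simp add: lborel_distr_plus)
    also have "\<dots> = emeasure lborel {y. y + t *\<^sub>R v \<in> S}"
      using S by (simp add: emeasure_distr vimage_def add.commute)
    finally show ?thesis by simp
  qed
  have "emeasure (lborel \<Otimes>\<^sub>M lborel) G = (\<integral>\<^sup>+t. emeasure lborel S * indicator {0..1::real} t \<partial>lborel)"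
    unfolding lborel.emeasure_pair_measure_alt[OF G]
    by (intro nn_integral_cong) (auto simp: G_def translate indicator_def vimage_def)
  then have "emeasure (lborel \<Otimes>\<^sub>M lborel) G = emeasure lborel S"
    by (simp add: nn_integral_cmult_indicator)
  moreover have "emeasure (lborel \<Otimes>\<^sub>M lborel) G = 0"
  proof -
    have "emeasure lborel ((\<lambda>t. (t, y)) -` G) = 0" for y
      by (rule null_setsD1, rule null_sets_subset[OF lines[of y] sets_Pair2[OF G]]) (auto simp: G_def)
    then show ?thesis
      by (simp add: lborel_pair.emeasure_pair_measure_alt2[OF G])
  qed
  ultimately show ?thesis
    using S by (simp add: null_sets_def)
qed

lemma convex_on_line:
  assumes "convex_on UNIV (f :: 'a::real_vector \<Rightarrow> real)"
  shows "convex_on UNIV (\<lambda>s. f (x + s *\<^sub>R v))"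
proof (rule convex_onI)
  fix t a b :: real
  have "x + ((1 - t) *\<^sub>R a + t *\<^sub>R b) *\<^sub>R v = (1 - t) *\<^sub>R (x + a *\<^sub>R v) + t *\<^sub>R (x + b *\<^sub>R v)"
    by (simp add: algebra_simps)
  moreover assume "0 < t" "t < 1"
  ultimately show "f (x + ((1 - t) *\<^sub>R a + t *\<^sub>R b) *\<^sub>R v) \<le> (1 - t) * f (x + a *\<^sub>R v) + t * f (x + b *\<^sub>R v)"
    using convex_onD[OF assms, of t] by simp
qed simp

lemma kinks_along_sets_borel:
  fixes f :: "'a::euclidean_space \<Rightarrow> real"
  assumes f: "continuous_on UNIV f"
  shows "{x. kink (\<lambda>s. f (x + s *\<^sub>R v)) 0} \<in> sets borel"
proof -
  define g where "g h x = diff_quot (\<lambda>s. f (x + s *\<^sub>R v)) 0 h" for h x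
  have cont: "continuous_on UNIV (g h)" if "h \<noteq> 0" for h
    unfolding g_def diff_quot_def using that by (intro continuous_intros continuous_on_compose2[OF f]) auto
  have "{x. \<forall>h<0. g h x \<le> r} = (\<Inter>h\<in>{..<0}. {x. g h x \<le> r})"
    "{x. \<forall>h>0. r \<le> g h x} = (\<Inter>h\<in>{0<..}. {x. r \<le> g h x})" for r
    by auto
  then have closed: "closed {x. \<forall>h<0. g h x \<le> r1}" "closed {x. \<forall>h>0. r2 \<le> g h x}" for r1 r2
    by (auto intro!: closed_INT closed_Collect_le cont continuous_on_const)
  have "{x. kink (\<lambda>s. f (x + s *\<^sub>R v)) 0}
      = (\<Union>r1\<in>\<rat>. \<Union>r2\<in>{r2\<in>\<rat>. r1 < r2}. {x. \<forall>h<0. g h x \<le> r1} \<inter> {x. \<forall>h>0. r2 \<le> g h x})"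
    unfolding kink_iff_rational g_def by auto
  also have "\<dots> \<in> sets borel"
    using closed by (intro sets.countable_UN'' countable_rat countable_Collect borel_closed closed_Int) auto
  finally show ?thesis .
qed

lemma convex_on_kinks_along_null_sets:
  fixes f :: "'a::euclidean_space \<Rightarrow> real"
  assumes cv: "convex_on UNIV f"
  shows "{x. kink (\<lambda>s. f (x + s *\<^sub>R v)) 0} \<in> null_sets lborel"
proof (rule null_sets_lborel_if_null_on_lines)
  show "{x. kink (\<lambda>s. f (x + s *\<^sub>R v)) 0} \<in> sets borel"
    using convex_on_continuous[OF open_UNIV cv] by (rule kinks_along_sets_borel)
  fix x
  have "{t. x + t *\<^sub>R v \<in> {x. kink (\<lambda>s. f (x + s *\<^sub>R v)) 0}} = {t. kink (\<lambda>s. f (x + s *\<^sub>R v)) t}"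
    using kink_shift[of "\<lambda>s. f (x + s *\<^sub>R v)"] by (simp add: scaleR_add_left add.assoc)
  then show "{t. x + t *\<^sub>R v \<in> {x. kink (\<lambda>s. f (x + s *\<^sub>R v)) 0}} \<in> null_sets lborel"
    using convex_on_countable_kinks[OF convex_on_line[OF cv]] by (simp add: countable_imp_null_set_lborel)
qed

lemma convex_on_le_basis_average:
  fixes f :: "'a::euclidean_space \<Rightarrow> real"
  assumes cv: "convex_on UNIV f"
  shows "f (x + z) \<le> (\<Sum>b\<in>Basis. f (x + (DIM('a) * (z \<bullet> b)) *\<^sub>R b)) / DIM('a)"
proof -
  have "x + z = (\<Sum>b\<in>Basis. (1 / DIM('a)) *\<^sub>R (x + (DIM('a) * (z \<bullet> b)) *\<^sub>R b))"
    by (simp add: scaleR_add_right sum.distrib euclidean_representation flip: scaleR_sum_left)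
  also have "f \<dots> \<le> (\<Sum>b\<in>Basis. (1 / DIM('a)) * f (x + (DIM('a) * (z \<bullet> b)) *\<^sub>R b))"
    by (rule convex_on_sum[OF finite_Basis _ cv]) auto
  finally show ?thesis
    by (simp add: sum_divide_distrib)
qed

lemma has_real_derivative_remainder_le:
  assumes "(g has_real_derivative D) (at 0)" and "e > 0"
  shows "\<forall>\<^sub>F h in nhds 0. \<bar>g h - g 0 - D * h\<bar> \<le> e * \<bar>h\<bar>"
proof -
  have "(g has_derivative (\<lambda>h. D * h)) (at 0)"
    using assms(1) by (simp add: has_field_derivative_def)
  then obtain d where "d > 0" "\<And>h. norm (h - 0) < d \<Longrightarrow> norm (g h - g 0 - D * (h - 0)) \<le> e * norm (h - 0)"
    using assms(2) unfolding has_derivative_at_alt by meson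
  then show ?thesis
    unfolding eventually_nhds_metric dist_norm by auto
qed

lemma convex_on_remainder_le:
  fixes f :: "'a::euclidean_space \<Rightarrow> real"
  assumes cv: "convex_on UNIV f" and "0 \<le> e"
    and remainder: "\<And>b. b \<in> Basis \<Longrightarrow>
      f (x + (DIM('a) * (z \<bullet> b)) *\<^sub>R b) - f x - d b * (DIM('a) * (z \<bullet> b)) \<le> e * \<bar>z \<bullet> b\<bar>"
  shows "f (x + z) - f x - (\<Sum>b\<in>Basis. (z \<bullet> b) * d b) \<le> e * norm z"
proof -
  define N where "N = real DIM('a)"
  have "N > 0"
    by (simp add: N_def)
  have "f (x + z) \<le> (\<Sum>b\<in>Basis. f (x + (N * (z \<bullet> b)) *\<^sub>R b)) / N"
    using convex_on_le_basis_average[OF cv] by (simp add: N_def)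
  also have "\<dots> \<le> (\<Sum>b\<in>Basis. f x + N * ((z \<bullet> b) * d b) + e * norm z) / N"
  proof (intro divide_right_mono sum_mono)
    fix b :: 'a assume "b \<in> Basis"
    then have "e * \<bar>z \<bullet> b\<bar> \<le> e * norm z"
      using \<open>0 \<le> e\<close> by (intro mult_left_mono Basis_le_norm)
    then show "f (x + (N * (z \<bullet> b)) *\<^sub>R b) \<le> f x + N * ((z \<bullet> b) * d b) + e * norm z"
      using remainder[OF \<open>b \<in> Basis\<close>] by (simp add: N_def algebra_simps)
  qed (use \<open>N > 0\<close> in simp)
  also have "\<dots> = f x + (\<Sum>b\<in>Basis. (z \<bullet> b) * d b) + e * norm z"
    using \<open>N > 0\<close> by (simp add: sum.distrib field_simps flip: sum_distrib_left) (simp add: N_def)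
  finally show ?thesis
    by simp
qed

lemma convex_on_remainder_upper_bound:
  fixes f :: "'a::euclidean_space \<Rightarrow> real"
  assumes cv: "convex_on UNIV f"
    and partial: "\<And>b. b \<in> Basis \<Longrightarrow> ((\<lambda>h. f (x + h *\<^sub>R b)) has_real_derivative d b) (at 0)"
    and "e > 0"
  shows "\<forall>\<^sub>F z in nhds 0. f (x + z) - f x - (\<Sum>b\<in>Basis. (z \<bullet> b) * d b) \<le> e * norm z"
proof -
  define N where "N = real DIM('a)"
  define R where "R b h = f (x + h *\<^sub>R b) - f x - d b * h" for b h
  have "N > 0"
    by (simp add: N_def)
  have "\<forall>\<^sub>F z in nhds 0. \<forall>b\<in>Basis. R b (N * (z \<bullet> b)) \<le> e * \<bar>z \<bullet> b\<bar>"
  proof (rule eventually_ball_finite[OF finite_Basis], rule ballI)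
    fix b :: 'a assume b: "b \<in> Basis"
    have "((\<lambda>z. N * (z \<bullet> b)) \<longlongrightarrow> N * (0 \<bullet> b)) (nhds 0)"
      by (intro tendsto_intros filterlim_ident)
    then have "filterlim (\<lambda>z. N * (z \<bullet> b)) (nhds 0) (nhds 0)"
      by simp
    from eventually_compose_filterlim[OF has_real_derivative_remainder_le[OF partial[OF b], of "e / N"] this]
    show "\<forall>\<^sub>F z in nhds 0. R b (N * (z \<bullet> b)) \<le> e * \<bar>z \<bullet> b\<bar>"
      using \<open>e > 0\<close> \<open>N > 0\<close> by (auto elim!: eventually_mono simp: R_def abs_mult)
  qed
  then show ?thesis
  proof (rule eventually_mono)
    fix z
    assume "\<forall>b\<in>Basis. R b (N * (z \<bullet> b)) \<le> e * \<bar>z \<bullet> b\<bar>"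
    then show "f (x + z) - f x - (\<Sum>b\<in>Basis. (z \<bullet> b) * d b) \<le> e * norm z"
      using \<open>e > 0\<close> by (intro convex_on_remainder_le[OF cv]) (auto simp: R_def N_def)
  qed
qed

lemma convex_on_has_derivative_if_partials:
  fixes f :: "'a::euclidean_space \<Rightarrow> real"
  assumes cv: "convex_on UNIV f"
    and partial: "\<And>b. b \<in> Basis \<Longrightarrow> ((\<lambda>h. f (x + h *\<^sub>R b)) has_real_derivative d b) (at 0)"
  shows "(f has_derivative (\<lambda>z. \<Sum>b\<in>Basis. (z \<bullet> b) * d b)) (at x)"
  unfolding has_derivative_at_alt
proof (intro conjI allI impI)
  define D where "D z = (\<Sum>b\<in>Basis. (z \<bullet> b) * d b)" for z
  show "bounded_linear (\<lambda>z. \<Sum>b\<in>Basis. (z \<bullet> b) * d b)"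
    by (intro bounded_linear_intros)
  fix e :: real assume "e > 0"
  have upper: "\<forall>\<^sub>F z in nhds 0. f (x + z) - f x - D z \<le> e * norm z"
    unfolding D_def by (rule convex_on_remainder_upper_bound[OF cv partial \<open>e > 0\<close>])
  have "filterlim uminus (nhds 0) (nhds (0::'a))"
    using tendsto_minus[OF filterlim_ident[of "nhds (0::'a)"]] by simp
  from eventually_compose_filterlim[OF upper this]
  have "\<forall>\<^sub>F z in nhds 0. f (x + - z) - f x - D (- z) \<le> e * norm (- z)" .
  with upper have "\<forall>\<^sub>F z in nhds 0.
      f (x + z) - f x - D z \<le> e * norm z \<and> f (x + - z) - f x - D (- z) \<le> e * norm (- z)"
    by (rule eventually_conj)
  then obtain \<delta> where "\<delta> > 0" and \<delta>: "\<And>z. dist z 0 < \<delta> \<Longrightarrow>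
      f (x + z) - f x - D z \<le> e * norm z \<and> f (x + - z) - f x - D (- z) \<le> e * norm (- z)"
    unfolding eventually_nhds_metric by blast
  txt \<open>Convexity bounds the remainder only from above; midpoint convexity turns the upper bound
    at \<open>-z\<close> into a lower bound at \<open>z\<close>.\<close>
  show "\<exists>d>0. \<forall>y. norm (y - x) < d \<longrightarrow> norm (f y - f x - D (y - x)) \<le> e * norm (y - x)"
  proof (intro exI[of _ \<delta>] conjI allI impI)
    fix y assume "norm (y - x) < \<delta>"
    define z where "z = y - x"
    have "D (- z) = - D z"
      by (simp add: D_def sum_negf)
    moreover have "(1 - 1/2) *\<^sub>R (x + z) + (1/2) *\<^sub>R (x + - z) = x"
      by (simp add: algebra_simps flip: scaleR_add_left)
    then have "f x \<le> f (x + z) / 2 + f (x + - z) / 2"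
      using convex_onD[OF cv, of "1/2" "x + z" "x + - z"] by simp
    moreover have "dist z 0 < \<delta>"
      using \<open>norm (y - x) < \<delta>\<close> by (simp add: z_def)
    ultimately have "\<bar>f (x + z) - f x - D z\<bar> \<le> e * norm z"
      using \<delta>[of z] by (simp add: abs_le_iff)
    then show "norm (f y - f x - D (y - x)) \<le> e * norm (y - x)"
      by (simp add: z_def)
  qed fact
qed

theorem convex_on_ae_differentiable:
  fixes f :: "'a::euclidean_space \<Rightarrow> real"
  assumes cv: "convex_on UNIV f"
  shows "AE x in lborel. f differentiable (at x)"
proof (rule AE_I')
  show "(\<Union>b\<in>Basis. {x. kink (\<lambda>s. f (x + s *\<^sub>R b)) 0}) \<in> null_sets lborel"
    using convex_on_kinks_along_null_sets[OF cv] by (intro null_sets_UN' countable_finite) auto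
  show "{x \<in> space lborel. \<not> f differentiable (at x)} \<subseteq> (\<Union>b\<in>Basis. {x. kink (\<lambda>s. f (x + s *\<^sub>R b)) 0})"
  proof (rule subsetI, rule ccontr)
    fix x assume x: "x \<in> {x \<in> space lborel. \<not> f differentiable (at x)}"
      and "x \<notin> (\<Union>b\<in>Basis. {x. kink (\<lambda>s. f (x + s *\<^sub>R b)) 0})"
    then have "(\<lambda>s. f (x + s *\<^sub>R b)) differentiable (at 0)" if "b \<in> Basis" for b
      using convex_on_differentiable_if_not_kink[OF convex_on_line[OF cv]] that by blast
    then have "(f has_derivative (\<lambda>z. \<Sum>b\<in>Basis. (z \<bullet> b) * deriv (\<lambda>s. f (x + s *\<^sub>R b)) 0)) (at x)"
      by (intro convex_on_has_derivative_if_partials[OF cv]) (simp add: DERIV_deriv_iff_real_differentiable)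
    then show False
      using x unfolding differentiable_def by blast
  qed
qed

lemma concave_on_linear:
  assumes "linear f" "convex S"
  shows "concave_on S f"
  using assms by (simp add: concave_on_iff linear_add linear_scale)

lemma concave_on_compose_linear:
  assumes "concave_on UNIV f" "linear g"
  shows "concave_on UNIV (\<lambda>x. f (g x))"
  using assms by (simp add: concave_on_iff linear_add linear_scale)

lemma concave_on_sum_fun:
  assumes "finite I" "convex S" "\<And>i. i \<in> I \<Longrightarrow> concave_on S (f i)"
  shows "concave_on S (\<lambda>x. \<Sum>i\<in>I. f i x)"
  using assms by (induction I rule: finite_induct) (auto simp: concave_on_const intro: concave_on_add)

lemma concave_on_min:
  assumes "concave_on S f" "concave_on S g"
  shows "concave_on S (\<lambda>x. min (f x) (g x))"
  unfolding concave_on_iff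
proof (intro conjI ballI allI impI)
  show "convex S"
    using assms(1) by (rule concave_on_imp_convex)
  fix x y and u v :: real assume "x \<in> S" "y \<in> S" "0 \<le> u" "0 \<le> v" "u + v = 1"
  then have "u * f x + v * f y \<le> f (u *\<^sub>R x + v *\<^sub>R y)" "u * g x + v * g y \<le> g (u *\<^sub>R x + v *\<^sub>R y)"
    using assms by (auto simp: concave_on_iff)
  moreover have "u * min (f x) (g x) \<le> u * f x" "u * min (f x) (g x) \<le> u * g x"
    "v * min (f y) (g y) \<le> v * f y" "v * min (f y) (g y) \<le> v * g y"
    using \<open>0 \<le> u\<close> \<open>0 \<le> v\<close> by (auto intro: mult_left_mono)
  ultimately show "u * min (f x) (g x) + v * min (f y) (g y) \<le> min (f (u *\<^sub>R x + v *\<^sub>R y)) (g (u *\<^sub>R x + v *\<^sub>R y))"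
    by linarith
qed

lemma concave_on_Min:
  assumes "finite I" "I \<noteq> {}" "\<And>i. i \<in> I \<Longrightarrow> concave_on S (f i)"
  shows "concave_on S (\<lambda>x. Min ((\<lambda>i. f i x) ` I))"
  using assms
proof (induction I rule: finite_ne_induct)
  case (insert i I)
  then show ?case
    by (simp add: concave_on_min)
qed simp

lemma concave_on_LIMSEQ:
  assumes "\<And>k. concave_on S (f k)" "\<And>x. x \<in> S \<Longrightarrow> (\<lambda>k. f k x) \<longlonglongrightarrow> g x" "convex S"
  shows "concave_on S g"
  unfolding concave_on_iff
proof (intro conjI ballI allI impI)
  fix x y and u v :: real assume xy: "x \<in> S" "y \<in> S" and uv: "0 \<le> u" "0 \<le> v" "u + v = 1"
  have "(\<lambda>k. u * f k x + v * f k y) \<longlonglongrightarrow> u * g x + v * g y"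
    using xy by (intro tendsto_intros assms(2))
  moreover have "(\<lambda>k. f k (u *\<^sub>R x + v *\<^sub>R y)) \<longlonglongrightarrow> g (u *\<^sub>R x + v *\<^sub>R y)"
    using convexD[OF \<open>convex S\<close> xy uv] by (rule assms(2))
  ultimately show "u * g x + v * g y \<le> g (u *\<^sub>R x + v *\<^sub>R y)"
    by (rule LIMSEQ_le) (use assms(1) xy uv in \<open>auto simp: concave_on_iff\<close>)
qed fact

lemma concave_on_ae_differentiable:
  fixes f :: "'a::euclidean_space \<Rightarrow> real"
  assumes "concave_on UNIV f"
  shows "AE x in lborel. f differentiable (at x)"
proof -
  have "AE x in lborel. (\<lambda>x. - f x) differentiable (at x)"
    using assms unfolding concave_on_def by (rule convex_on_ae_differentiable)
  then show ?thesis
    by eventually_elim (drule differentiable_minus, simp)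
qed

section \<open>Fixed points of contractions in the sup norm\<close>

lemma le_zero_if_le_geometric:
  fixes a \<gamma> M :: real
  assumes "0 \<le> \<gamma>" "\<gamma> < 1" and le: "\<And>k. a \<le> \<gamma> ^ k * M"
  shows "a \<le> 0"
proof -
  have "(\<lambda>k. \<gamma> ^ k * M) \<longlonglongrightarrow> 0 * M"
    using assms by (intro tendsto_intros LIMSEQ_power_zero) auto
  then have "a \<le> 0 * M"
    by (rule LIMSEQ_le_const) (use le in blast)
  then show ?thesis
    by simp
qed

locale sup_contraction =
  fixes T :: "('a \<Rightarrow> real) \<Rightarrow> 'a \<Rightarrow> real" and \<gamma> K :: real
  assumes contraction: "(\<And>x. \<bar>W x - W' x\<bar> \<le> d) \<Longrightarrow> \<bar>T W x - T W' x\<bar> \<le> \<gamma> * d"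
    and factor: "0 \<le> \<gamma>" "\<gamma> < 1"
    and T_zero_bounded: "\<bar>T (\<lambda>_. 0) x\<bar> \<le> K"
begin

abbreviation iterate :: "nat \<Rightarrow> 'a \<Rightarrow> real" where
  "iterate k \<equiv> (T ^^ k) (\<lambda>_. 0)"

definition iterate_bound :: real where
  "iterate_bound = K / (1 - \<gamma>)"

lemma iterate_bound_nonneg: "0 \<le> iterate_bound"
  using T_zero_bounded[of undefined] factor by (simp add: iterate_bound_def)

lemma iterate_bounded: "\<bar>iterate k x\<bar> \<le> iterate_bound"
proof (induction k arbitrary: x)
  case (Suc k)
  have "\<bar>T (iterate k) x - T (\<lambda>_. 0) x\<bar> \<le> \<gamma> * iterate_bound"
    using Suc.IH by (intro contraction) simp
  moreover have "\<gamma> * iterate_bound + K = iterate_bound"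
    using factor by (simp add: iterate_bound_def field_simps)
  ultimately show ?case
    using T_zero_bounded[of x] by simp
qed (simp add: iterate_bound_nonneg)

lemma iterate_Cauchy: "\<bar>iterate (k + m) x - iterate k x\<bar> \<le> \<gamma> ^ k * (2 * iterate_bound)"
proof (induction k arbitrary: x)
  case 0
  then show ?case
    using iterate_bounded[of m x] iterate_bound_nonneg by simp
next
  case (Suc k)
  then show ?case
    using contraction[of "iterate (k + m)" "iterate k"] by (simp add: mult.assoc)
qed

definition fixpoint :: "'a \<Rightarrow> real" where
  "fixpoint x = lim (\<lambda>k. iterate k x)"

lemma iterate_tendsto: "(\<lambda>k. iterate k x) \<longlonglongrightarrow> fixpoint x"
proof -
  have "(\<lambda>k. \<gamma> ^ k * (2 * iterate_bound)) \<longlonglongrightarrow> 0 * (2 * iterate_bound)"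
    using factor by (intro tendsto_intros LIMSEQ_power_zero) auto
  then have lim: "(\<lambda>k. \<gamma> ^ k * (2 * iterate_bound)) \<longlonglongrightarrow> 0"
    by simp
  have "Cauchy (\<lambda>k. iterate k x)"
    unfolding Cauchy_altdef2 dist_real_def
  proof (intro allI impI)
    fix e :: real assume "e > 0"
    then have "\<forall>\<^sub>F k in sequentially. \<gamma> ^ k * (2 * iterate_bound) < e"
      by (rule order_tendstoD(2)[OF lim])
    then obtain N where "\<gamma> ^ N * (2 * iterate_bound) < e"
      unfolding eventually_sequentially by blast
    moreover have "\<bar>iterate n x - iterate N x\<bar> \<le> \<gamma> ^ N * (2 * iterate_bound)" if "n \<ge> N" for n
      using iterate_Cauchy[of N "n - N" x] that by simp
    ultimately show "\<exists>N. \<forall>n\<ge>N. \<bar>iterate n x - iterate N x\<bar> < e"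
      by force
  qed
  then show ?thesis
    unfolding fixpoint_def by (simp add: Cauchy_convergent_iff convergent_LIMSEQ_iff)
qed

lemma fixpoint_close: "\<bar>fixpoint x - iterate k x\<bar> \<le> \<gamma> ^ k * (2 * iterate_bound)"
proof -
  have "(\<lambda>m. \<bar>iterate (m + k) x - iterate k x\<bar>) \<longlonglongrightarrow> \<bar>fixpoint x - iterate k x\<bar>"
    by (intro tendsto_intros LIMSEQ_ignore_initial_segment iterate_tendsto)
  then show ?thesis
    using iterate_Cauchy[of k _ x] by (intro LIMSEQ_le_const2) (auto simp: add.commute)
qed

lemma fixpoint_bounded: "\<bar>fixpoint x\<bar> \<le> iterate_bound"
  using iterate_bounded by (intro LIMSEQ_le_const2[OF tendsto_rabs[OF iterate_tendsto]]) auto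

lemma T_fixpoint: "T fixpoint = fixpoint"
proof
  fix x
  have "\<bar>T fixpoint x - fixpoint x\<bar> \<le> \<gamma> ^ k * (\<gamma> * (4 * iterate_bound))" for k
  proof -
    have "\<bar>T fixpoint x - T (iterate k) x\<bar> \<le> \<gamma> * (\<gamma> ^ k * (2 * iterate_bound))"
      by (intro contraction fixpoint_close)
    moreover have "\<bar>fixpoint x - iterate (Suc k) x\<bar> \<le> \<gamma> * (\<gamma> ^ k * (2 * iterate_bound))"
      using fixpoint_close[of x "Suc k"] by simp
    ultimately show ?thesis
      by (simp add: abs_le_iff algebra_simps)
  qed
  then have "\<bar>T fixpoint x - fixpoint x\<bar> \<le> 0"
    by (rule le_zero_if_le_geometric[OF factor])
  then show "T fixpoint x = fixpoint x"
    by simp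
qed

lemma fixpoint_unique:
  assumes "T W = W" and "\<And>x. \<bar>W x\<bar> \<le> B"
  shows "W = fixpoint"
proof
  fix x
  have "\<bar>W x - fixpoint x\<bar> \<le> \<gamma> ^ k * (B + iterate_bound)" for k
  proof (induction k arbitrary: x)
    case 0
    then show ?case
      using assms(2)[of x] fixpoint_bounded[of x] by simp
  next
    case (Suc k)
    then show ?case
      using contraction[of W fixpoint, OF Suc.IH] assms(1) T_fixpoint by (simp add: mult.assoc)
  qed
  then have "\<bar>W x - fixpoint x\<bar> \<le> 0"
    by (rule le_zero_if_le_geometric[OF factor])
  then show "W x = fixpoint x"
    by simp
qed

end

section \<open>Concavity of the optimal value in the preferences\<close>

lemma is_dist_bounds:
  assumes "is_dist \<mu>"
  shows "0 \<le> \<mu> x" "\<mu> x \<le> 1"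
proof -
  show "0 \<le> \<mu> x"
    using assms by (simp add: is_dist_def)
  have "\<mu> x \<le> (\<Sum>y\<in>UNIV. \<mu> y)"
    using assms by (intro member_le_sum) (auto simp: is_dist_def)
  then show "\<mu> x \<le> 1"
    using assms by (simp add: is_dist_def)
qed

lemma abs_sum_mult_le:
  fixes a w :: "'i \<Rightarrow> real"
  assumes "\<And>i. i \<in> S \<Longrightarrow> \<bar>w i\<bar> \<le> 1"
  shows "\<bar>\<Sum>i\<in>S. a i * w i\<bar> \<le> (\<Sum>i\<in>S. \<bar>a i\<bar>)"
proof -
  have "\<bar>\<Sum>i\<in>S. a i * w i\<bar> \<le> (\<Sum>i\<in>S. \<bar>a i\<bar> * \<bar>w i\<bar>)"
    using sum_abs[of "\<lambda>i. a i * w i" S] by (simp add: abs_mult)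
  also have "\<dots> \<le> (\<Sum>i\<in>S. \<bar>a i\<bar>)"
    using assms by (intro sum_mono mult_left_le) auto
  finally show ?thesis .
qed

lemma abs_Min_range_le:
  fixes A :: "'i::finite \<Rightarrow> real"
  assumes "\<And>i. \<bar>A i\<bar> \<le> K"
  shows "\<bar>Min (range A)\<bar> \<le> K"
proof -
  have "Min (range A) \<in> range A"
    by (rule Min_in) auto
  then obtain i where "Min (range A) = A i"
    by blast
  then show ?thesis
    using assms by simp
qed

lemma abs_Min_range_diff_le:
  fixes A B :: "'i::finite \<Rightarrow> real"
  assumes "\<And>i. \<bar>A i - B i\<bar> \<le> e"
  shows "\<bar>Min (range A) - Min (range B)\<bar> \<le> e"
proof -
  have "Min (range A) \<in> range A" "Min (range B) \<in> range B"
    by (rule Min_in, simp, simp)+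
  then obtain i j where i: "Min (range A) = A i" and j: "Min (range B) = B j"
    by blast
  have "Min (range A) \<le> A j" "Min (range B) \<le> B i"
    by (rule Min_le, simp, simp)+
  then show ?thesis
    using assms[of i] assms[of j] i j by (simp add: abs_le_iff)
qed

lemma abs_min_diff_le: "\<bar>min a b - min a b'\<bar> \<le> \<bar>b - b'\<bar>" for a b b' :: real
  by (auto simp: min_def abs_if)

lemma bounded_linear_eta_a: "bounded_linear (\<lambda>\<eta>. eta_a \<eta> th)"
  unfolding eta_a_def by (intro bounded_linear_compose[OF bounded_linear_vec_nth] bounded_linear_intros)

lemma bounded_linear_eta_b: "bounded_linear (\<lambda>\<eta>. eta_b \<eta> th)"
  unfolding eta_b_def by (intro bounded_linear_compose[OF bounded_linear_vec_nth] bounded_linear_intros)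

lemma bounded_linear_eta_c: "bounded_linear (\<lambda>\<eta>. eta_c \<eta> l)"
  unfolding eta_c_def by (intro bounded_linear_compose[OF bounded_linear_vec_nth] bounded_linear_intros)

lemma linear_Qbar: "linear (\<lambda>\<eta>. Qbar \<eta> thh \<mu> \<nu>)"
  unfolding Qbar_def by (intro bounded_linear.linear bounded_linear_intros bounded_linear_eta_a bounded_linear_eta_b)

lemma abs_V0_le:
  assumes "is_dist \<mu>"
  shows "\<bar>V0 \<eta> \<mu>\<bar> \<le> (\<Sum>th\<in>UNIV. \<bar>eta_b \<eta> th\<bar>)"
  unfolding V0_def using is_dist_bounds[OF assms] by (intro abs_sum_mult_le) auto

locale timely_decision =
  fixes p :: "'th::finite \<Rightarrow> 'la::finite \<Rightarrow> real"
    and q :: "'th \<Rightarrow> 'la \<Rightarrow> 'om::finite \<Rightarrow> real"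
    and c :: "'la \<Rightarrow> real"
  assumes q_dist: "\<And>th l. is_dist (q th l)"
    and p_range: "\<And>th l. 0 < p th l \<and> p th l < 1"
begin

definition discount :: real where
  "discount = 1 - Min (range (case_prod p))"

lemma discount: "0 \<le> discount" "discount < 1" "1 - p th l \<le> discount"
proof -
  have "0 < Min (range (case_prod p))"
    using p_range by (subst Min_gr_iff) auto
  moreover have "Min (range (case_prod p)) \<le> p th l"
    by (rule Min_le) (auto intro: image_eqI[of _ _ "(th, l)"])
  ultimately show "0 \<le> discount" "discount < 1" "1 - p th l \<le> discount"
    using p_range[of th l] unfolding discount_def by linarith+
qed

definition obs_prob :: "'la \<Rightarrow> ('th \<Rightarrow> real) \<Rightarrow> 'om \<Rightarrow> real" where
  "obs_prob l \<mu> w = (\<Sum>th\<in>UNIV. (1 - p th l) * q th l w * \<mu> th)"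

lemma obs_prob_nonneg: "(\<And>th. 0 \<le> \<mu> th) \<Longrightarrow> 0 \<le> obs_prob l \<mu> w"
  unfolding obs_prob_def using p_range q_dist
  by (intro sum_nonneg mult_nonneg_nonneg) (auto simp: is_dist_def less_imp_le)

lemma sum_obs_prob_le_discount:
  assumes "is_dist \<mu>"
  shows "(\<Sum>w\<in>UNIV. obs_prob l \<mu> w) \<le> discount"
proof -
  have "(\<Sum>w\<in>UNIV. obs_prob l \<mu> w) = (\<Sum>th\<in>UNIV. (1 - p th l) * \<mu> th * (\<Sum>w\<in>UNIV. q th l w))"
    unfolding obs_prob_def by (subst sum.swap) (simp add: sum_distrib_left mult_ac)
  also have "\<dots> = (\<Sum>th\<in>UNIV. (1 - p th l) * \<mu> th)"
    using q_dist by (simp add: is_dist_def)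
  also have "\<dots> \<le> (\<Sum>th\<in>UNIV. discount * \<mu> th)"
    using discount(3) is_dist_bounds[OF assms] by (intro sum_mono mult_right_mono) auto
  also have "\<dots> = discount"
    using assms by (simp add: is_dist_def flip: sum_distrib_left)
  finally show ?thesis .
qed

lemma Qacq_survival_eq:
  "Qacq p q c \<eta> W l \<mu> 1 = eta_c \<eta> l * c l + V0 \<eta> (Mbar p l \<mu>) * (\<Sum>th\<in>UNIV. p th l * \<mu> th)
     + (\<Sum>w\<in>UNIV. W (Mupd p q l \<mu> w) * obs_prob l \<mu> w)"
  by (simp add: Qacq_def obs_prob_def)

lemma Qacq_contraction:
  assumes W: "\<And>\<mu>'. \<bar>W \<mu>' - W' \<mu>'\<bar> \<le> d" and \<mu>: "is_dist \<mu>"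
  shows "\<bar>Qacq p q c \<eta> W l \<mu> 1 - Qacq p q c \<eta> W' l \<mu> 1\<bar> \<le> discount * d"
proof -
  have "\<bar>Qacq p q c \<eta> W l \<mu> 1 - Qacq p q c \<eta> W' l \<mu> 1\<bar>
      = \<bar>\<Sum>w\<in>UNIV. (W (Mupd p q l \<mu> w) - W' (Mupd p q l \<mu> w)) * obs_prob l \<mu> w\<bar>"
    by (simp add: Qacq_survival_eq sum_subtractf left_diff_distrib)
  also have "\<dots> \<le> (\<Sum>w\<in>UNIV. d * obs_prob l \<mu> w)"
    using W obs_prob_nonneg is_dist_bounds[OF \<mu>]
    by (intro order_trans[OF sum_abs] sum_mono) (simp add: abs_mult mult_right_mono)
  also have "\<dots> \<le> d * discount"
    using sum_obs_prob_le_discount[OF \<mu>] W[of \<mu>]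
    by (simp add: mult_left_mono flip: sum_distrib_left)
  finally show ?thesis
    by (simp add: mult.commute)
qed

definition bellman_op ::
    "('th, 'la) pref \<Rightarrow> (('th \<Rightarrow> real) \<Rightarrow> real) \<Rightarrow> ('th \<Rightarrow> real) \<Rightarrow> real" where
  "bellman_op \<eta> W \<mu> = (if is_dist \<mu> then bellman p q c \<eta> W \<mu> else 0)"

lemma bellman_op_contraction:
  assumes "\<And>\<mu>'. \<bar>W \<mu>' - W' \<mu>'\<bar> \<le> d"
  shows "\<bar>bellman_op \<eta> W \<mu> - bellman_op \<eta> W' \<mu>\<bar> \<le> discount * d"
proof (cases "is_dist \<mu>")
  case True
  let ?A = "Min (range (\<lambda>thh. Qbar \<eta> thh \<mu> 1))"
  let ?B = "\<lambda>W. Min (range (\<lambda>l. Qacq p q c \<eta> W l \<mu> 1))"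
  have "\<bar>min ?A (?B W) - min ?A (?B W')\<bar> \<le> \<bar>?B W - ?B W'\<bar>"
    by (rule abs_min_diff_le)
  also have "\<dots> \<le> discount * d"
    by (intro abs_Min_range_diff_le Qacq_contraction[OF assms True])
  finally show ?thesis
    using True by (simp add: bellman_op_def bellman_def)
next
  case False
  then show ?thesis
    using assms[of \<mu>] discount(1) by (simp add: bellman_op_def)
qed

lemma is_dist_Mbar:
  assumes "is_dist \<mu>"
  shows "is_dist (Mbar p l \<mu>)"
proof -
  have nonneg: "0 \<le> p th l * \<mu> th" for th
    using p_range[of th l] is_dist_bounds[OF assms] by simp
  have "\<exists>th. \<mu> th \<noteq> 0"
  proof (rule ccontr)
    assume "\<not> (\<exists>th. \<mu> th \<noteq> 0)"
    then show False
      using assms by (simp add: is_dist_def)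
  qed
  then obtain th where "\<mu> th \<noteq> 0"
    by blast
  then have "0 < p th l * \<mu> th"
    using p_range[of th l] is_dist_bounds[OF assms, of th] by simp
  then have "0 < (\<Sum>th\<in>UNIV. p th l * \<mu> th)"
    using nonneg by (intro sum_pos2) auto
  moreover have "(\<Sum>th\<in>UNIV. p th l * \<mu> th / (\<Sum>th\<in>UNIV. p th l * \<mu> th))
      = (\<Sum>th\<in>UNIV. p th l * \<mu> th) / (\<Sum>th\<in>UNIV. p th l * \<mu> th)"
    by (rule sum_divide_distrib[symmetric])
  ultimately show ?thesis
    using nonneg unfolding is_dist_def Mbar_def by simp
qed

definition cost_bound :: "('th, 'la) pref \<Rightarrow> real" where
  "cost_bound \<eta> =
     (\<Sum>th\<in>UNIV. \<bar>eta_a \<eta> th\<bar>) + (\<Sum>th\<in>UNIV. \<bar>eta_b \<eta> th\<bar>) + (\<Sum>l\<in>UNIV. \<bar>eta_c \<eta> l * c l\<bar>)"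

lemma bellman_op_zero_bounded: "\<bar>bellman_op \<eta> (\<lambda>_. 0) \<mu>\<bar> \<le> cost_bound \<eta>"
proof (cases "is_dist \<mu>")
  case True
  have "\<bar>Qbar \<eta> thh \<mu> 1\<bar> \<le> cost_bound \<eta>" for thh
  proof -
    have "\<bar>Qbar \<eta> thh \<mu> 1\<bar> \<le> (\<Sum>th\<in>UNIV - {thh}. \<bar>eta_a \<eta> th\<bar>)"
      unfolding Qbar_def using is_dist_bounds[OF True] by (simp add: abs_sum_mult_le)
    also have "\<dots> \<le> cost_bound \<eta>"
      unfolding cost_bound_def by (intro add_increasing2 sum_nonneg sum_mono2) auto
    finally show ?thesis .
  qed
  moreover have "\<bar>Qacq p q c \<eta> (\<lambda>_. 0) l \<mu> 1\<bar> \<le> cost_bound \<eta>" for l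
  proof -
    let ?S = "\<Sum>th\<in>UNIV. p th l * \<mu> th"
    have "0 \<le> ?S"
      using p_range is_dist_bounds[OF True] by (intro sum_nonneg) (simp add: less_imp_le)
    moreover have "?S \<le> (\<Sum>th\<in>UNIV. \<mu> th)"
      using p_range is_dist_bounds[OF True] by (intro sum_mono mult_left_le_one_le) (auto simp: less_imp_le)
    ultimately have "\<bar>V0 \<eta> (Mbar p l \<mu>) * ?S\<bar> \<le> \<bar>V0 \<eta> (Mbar p l \<mu>)\<bar>"
      using True by (simp add: abs_mult mult_right_le_one_le is_dist_def)
    also have "\<dots> \<le> (\<Sum>th\<in>UNIV. \<bar>eta_b \<eta> th\<bar>)"
      by (rule abs_V0_le[OF is_dist_Mbar[OF True]])
    finally have "\<bar>V0 \<eta> (Mbar p l \<mu>) * ?S\<bar> \<le> (\<Sum>th\<in>UNIV. \<bar>eta_b \<eta> th\<bar>)" .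
    moreover have "\<bar>eta_c \<eta> l * c l\<bar> \<le> (\<Sum>l\<in>UNIV. \<bar>eta_c \<eta> l * c l\<bar>)"
      by (rule member_le_sum) auto
    moreover have "0 \<le> (\<Sum>th\<in>UNIV. \<bar>eta_a \<eta> th\<bar>)"
      by (rule sum_nonneg) simp
    moreover have "Qacq p q c \<eta> (\<lambda>_. 0) l \<mu> 1 = eta_c \<eta> l * c l + V0 \<eta> (Mbar p l \<mu>) * ?S"
      by (simp add: Qacq_survival_eq)
    ultimately show ?thesis
      unfolding cost_bound_def
      using abs_triangle_ineq[of "eta_c \<eta> l * c l" "V0 \<eta> (Mbar p l \<mu>) * ?S"] by linarith
  qed
  ultimately have "\<bar>Min (range (\<lambda>thh. Qbar \<eta> thh \<mu> 1))\<bar> \<le> cost_bound \<eta>"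
    "\<bar>Min (range (\<lambda>l. Qacq p q c \<eta> (\<lambda>_. 0) l \<mu> 1))\<bar> \<le> cost_bound \<eta>"
    by (blast intro: abs_Min_range_le)+
  then show ?thesis
    using True by (simp add: bellman_op_def bellman_def min_def)
next
  case False
  then show ?thesis
    by (simp add: bellman_op_def cost_bound_def sum_nonneg)
qed

lemma sup_contraction_bellman_op: "sup_contraction (bellman_op \<eta>) discount (cost_bound \<eta>)"
proof unfold_locales
  show "\<bar>bellman_op \<eta> W x - bellman_op \<eta> W' x\<bar> \<le> discount * d" if "\<And>x. \<bar>W x - W' x\<bar> \<le> d" for W W' d x
    using that by (rule bellman_op_contraction)
qed (simp_all add: discount bellman_op_zero_bounded)

lemma Vstar1_eq_fixpoint: "Vstar1 p q c \<eta> = sup_contraction.fixpoint (bellman_op \<eta>)"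
proof -
  interpret sup_contraction "bellman_op \<eta>" discount "cost_bound \<eta>"
    by (rule sup_contraction_bellman_op)
  have char: "(\<forall>\<mu>. is_dist \<mu> \<longrightarrow> W \<mu> = bellman p q c \<eta> W \<mu>) \<and> (\<forall>\<mu>. \<not> is_dist \<mu> \<longrightarrow> W \<mu> = 0)
      \<and> (\<exists>B. \<forall>\<mu>. \<bar>W \<mu>\<bar> \<le> B)
      \<longleftrightarrow> bellman_op \<eta> W = W \<and> (\<exists>B. \<forall>\<mu>. \<bar>W \<mu>\<bar> \<le> B)" for W
    by (auto simp: bellman_op_def fun_eq_iff)
  show ?thesis
    unfolding Vstar1_def char
  proof (rule the_equality)
    show "bellman_op \<eta> fixpoint = fixpoint \<and> (\<exists>B. \<forall>\<mu>. \<bar>fixpoint \<mu>\<bar> \<le> B)"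
      using T_fixpoint fixpoint_bounded by blast
    show "W = fixpoint" if "bellman_op \<eta> W = W \<and> (\<exists>B. \<forall>\<mu>. \<bar>W \<mu>\<bar> \<le> B)" for W
      using that fixpoint_unique by blast
  qed
qed

lemma bellman_iterates_tendsto_Vstar1:
  "(\<lambda>k. (bellman_op \<eta> ^^ k) (\<lambda>_. 0) \<mu>) \<longlonglongrightarrow> Vstar1 p q c \<eta> \<mu>"
  unfolding Vstar1_eq_fixpoint by (rule sup_contraction.iterate_tendsto[OF sup_contraction_bellman_op])

lemma concave_on_Qacq:
  assumes W: "\<And>\<mu>'. concave_on UNIV (\<lambda>\<eta>. W \<eta> \<mu>')" and \<mu>: "\<And>th. 0 \<le> \<mu> th"
  shows "concave_on UNIV (\<lambda>\<eta>. Qacq p q c \<eta> (W \<eta>) l \<mu> 1)"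
proof -
  have "linear (\<lambda>\<eta>. eta_c \<eta> l * c l + V0 \<eta> (Mbar p l \<mu>) * (\<Sum>th\<in>UNIV. p th l * \<mu> th))"
    unfolding V0_def by (intro bounded_linear.linear bounded_linear_intros bounded_linear_eta_b bounded_linear_eta_c)
  then have "concave_on UNIV (\<lambda>\<eta>. eta_c \<eta> l * c l + V0 \<eta> (Mbar p l \<mu>) * (\<Sum>th\<in>UNIV. p th l * \<mu> th))"
    by (rule concave_on_linear) simp
  moreover have "concave_on UNIV (\<lambda>\<eta>. obs_prob l \<mu> w * W \<eta> (Mupd p q l \<mu> w))" for w
    using obs_prob_nonneg[of \<mu> l w] \<mu> W by (intro concave_on_cmul) auto
  then have "concave_on UNIV (\<lambda>\<eta>. \<Sum>w\<in>UNIV. W \<eta> (Mupd p q l \<mu> w) * obs_prob l \<mu> w)"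
    by (intro concave_on_sum_fun) (simp_all add: mult.commute)
  ultimately show ?thesis
    unfolding Qacq_survival_eq by (rule concave_on_add)
qed

lemma concave_on_bellman_op:
  assumes "\<And>\<mu>'. concave_on UNIV (\<lambda>\<eta>. W \<eta> \<mu>')"
  shows "concave_on UNIV (\<lambda>\<eta>. bellman_op \<eta> (W \<eta>) \<mu>)"
proof (cases "is_dist \<mu>")
  case True
  have "concave_on UNIV (\<lambda>\<eta>. min (Min (range (\<lambda>thh. Qbar \<eta> thh \<mu> 1)))
      (Min (range (\<lambda>l. Qacq p q c \<eta> (W \<eta>) l \<mu> 1))))"
    using assms is_dist_bounds[OF True]
    by (intro concave_on_min concave_on_Min concave_on_Qacq concave_on_linear[OF linear_Qbar]) auto
  then show ?thesis
    using True by (simp add: bellman_op_def bellman_def)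
next
  case False
  then show ?thesis
    by (simp add: bellman_op_def concave_on_const)
qed

lemma concave_on_bellman_iterate: "concave_on UNIV (\<lambda>\<eta>. (bellman_op \<eta> ^^ k) (\<lambda>_. 0) \<mu>)"
proof (induction k arbitrary: \<mu>)
  case 0
  then show ?case
    by (simp add: concave_on_const)
next
  case (Suc k)
  then show ?case
    using concave_on_bellman_op[of "\<lambda>\<eta>. (bellman_op \<eta> ^^ k) (\<lambda>_. 0)"] by simp
qed

lemma concave_on_Vstar1: "concave_on UNIV (\<lambda>\<eta>. Vstar1 p q c \<eta> \<mu>)"
  by (rule concave_on_LIMSEQ[OF concave_on_bellman_iterate bellman_iterates_tendsto_Vstar1 convex_UNIV])

lemma concave_on_Qtilde:
  assumes "\<And>th. 0 \<le> \<mu> th"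
  shows "concave_on UNIV (\<lambda>\<eta>. Qtilde p q c \<eta> a \<mu> 1)"
proof (cases a)
  case (Inl l)
  then show ?thesis
    using concave_on_Qacq[OF concave_on_Vstar1 assms] by (simp add: Qtilde_def Qstar_def)
next
  case (Inr thh)
  then show ?thesis
    by (simp add: Qtilde_def concave_on_linear linear_Qbar)
qed

lemma Mupd_nonneg:
  assumes "\<And>th. 0 \<le> \<mu> th"
  shows "0 \<le> Mupd p q l \<mu> w th"
proof -
  have "0 \<le> (1 - p th' l) * q th' l w * \<mu> th'" for th'
    using p_range[of th' l] is_dist_bounds(1)[OF q_dist] assms[of th'] by simp
  then show ?thesis
    unfolding Mupd_def by (simp add: divide_nonneg_nonneg sum_nonneg)
qed

lemma belief_nonneg:
  assumes "\<And>th. 0 \<le> \<mu> th"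
  shows "0 \<le> belief p q \<mu> xs th"
  using assms
proof (induction xs arbitrary: \<mu>)
  case (Cons x xs)
  then show ?case
    by (cases x) (auto split: sum.split intro: Mupd_nonneg)
qed simp


lemma ae_Qtilde_belief_differentiable:
  assumes "is_dist \<mu>"
  shows "AE x in lborel. (\<lambda>y :: ('th, 'la) pref \<times> 'b::euclidean_space.
    Qtilde p q c (fst y) a (belief p q \<mu> xs) 1) differentiable (at x)"
proof -
  have "0 \<le> belief p q \<mu> xs th" for th
    using is_dist_bounds(1)[OF assms] by (rule belief_nonneg)
  then show ?thesis
    using bounded_linear.linear[OF bounded_linear_fst]
    by (intro concave_on_ae_differentiable concave_on_compose_linear[OF concave_on_Qtilde])
qed
end

lemma differentiable_prod:
  fixes f :: "'i \<Rightarrow> 'a::real_normed_vector \<Rightarrow> 'b::real_normed_field"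
  assumes "finite S" "\<And>i. i \<in> S \<Longrightarrow> f i differentiable (at x)"
  shows "(\<lambda>y. \<Prod>i\<in>S. f i y) differentiable (at x)"
  using assms by (induction S rule: finite_induct) simp_all

lemma boltz_differentiable:
  fixes x :: "('th::finite, 'la::finite) pref \<times> real"
  assumes Q: "\<And>b. (\<lambda>y. Qtilde p q c (fst y) b \<mu> \<nu>) differentiable (at x)"
  shows "(\<lambda>y. boltz p q c (fst y) (snd y) a \<mu> \<nu>) differentiable (at x)"
proof -
  have exp: "exp differentiable (at z)" for z :: real
    using DERIV_exp real_differentiable_def by blast
  have snd: "snd differentiable (at x)"
    by (rule bounded_linear_imp_differentiable[OF bounded_linear_snd])
  have "(\<lambda>y. exp (- snd y * Qtilde p q c (fst y) b \<mu> \<nu>)) differentiable (at x)" for b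
    by (rule differentiable_compose[of exp, OF exp]) (intro differentiable_mult differentiable_minus snd Q)
  moreover have "0 < (\<Sum>b\<in>UNIV. exp (- snd x * Qtilde p q c (fst x) b \<mu> \<nu>))"
    by (intro sum_pos) auto
  ultimately show ?thesis
    unfolding boltz_def by (intro differentiable_divide differentiable_sum) auto
qed

lemma likelihood_differentiable:
  fixes x :: "('th::finite, 'la::finite) pref \<times> real"
  assumes "\<And>n t b. n < length D \<Longrightarrow>
      (\<lambda>y. Qtilde p q c (fst y) b (belief p q (fst (D ! n)) (take t (snd (D ! n)))) 1) differentiable (at x)"
  shows "(\<lambda>y. likelihood p q c D (fst y) (snd y)) differentiable (at x)"
  unfolding likelihood_def using assms by (intro differentiable_prod boltz_differentiable) auto

lemma unnorm_posterior_differentiable: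
  assumes "prior_eta differentiable (at (fst x))" "prior_rho differentiable (at (snd x))"
    and "(\<lambda>y. likelihood p q c D (fst y) (snd y)) differentiable (at x)"
  shows "(\<lambda>y. unnorm_posterior p q c prior_eta prior_rho D y / Z) differentiable (at x)"
  unfolding unnorm_posterior_def divide_inverse using assms
  by (intro differentiable_mult differentiable_const
      differentiable_compose[of prior_eta fst, OF _ bounded_linear_imp_differentiable[OF bounded_linear_fst]]
      differentiable_compose[of prior_rho snd, OF _ bounded_linear_imp_differentiable[OF bounded_linear_snd]])

theorem proposition7:
  fixes p :: "'th::finite \<Rightarrow> 'la::finite \<Rightarrow> real"
    and q :: "'th \<Rightarrow> 'la \<Rightarrow> 'om::finite \<Rightarrow> real"
    and c :: "'la \<Rightarrow> real"
    and prior_eta :: "('th, 'la) pref \<Rightarrow> real"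
    and prior_rho :: "real \<Rightarrow> real"
    and D :: "('th, 'la, 'om) episode list"
    and Z :: real
  assumes q_dist: "\<And>th l. is_dist (q th l)"
    and p_range: "\<And>th l. 0 < p th l \<and> p th l < 1"
    and c_pos: "\<And>l. 0 < c l"
    and D_wf: "\<And>e. e \<in> set D \<Longrightarrow> wf_episode e"
    and prior_eta_diff: "\<And>\<eta>. prior_eta differentiable (at \<eta>)"
    and prior_rho_diff: "\<And>\<rho>. prior_rho differentiable (at \<rho>)"
  shows "AE x in lborel.
           (\<lambda>y. unnorm_posterior p q c prior_eta prior_rho D y / Z) differentiable (at x)"
proof -
  interpret timely_decision p q c
    using q_dist p_range by unfold_locales
  let ?Q = "\<lambda>(n, t, b) y. Qtilde p q c (fst y) b (belief p q (fst (D ! n)) (take t (snd (D ! n)))) 1"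
  have "AE x in lborel. \<forall>z\<in>{..<length D} \<times> UNIV \<times> UNIV. ?Q z differentiable (at x)"
  proof (rule AE_ball_countable')
    fix z assume "z \<in> {..<length D} \<times> (UNIV :: nat set) \<times> (UNIV :: ('la + 'th) set)"
    then obtain n t b where z: "z = (n, t, b)" and "D ! n \<in> set D"
      by auto
    then have "is_dist (fst (D ! n))"
      using D_wf by (simp add: wf_episode_def)
    from ae_Qtilde_belief_differentiable[OF this]
    show "AE x in lborel. ?Q z differentiable (at x)"
      unfolding z by simp
  qed (auto intro: countable_finite)
  then show ?thesis
    by eventually_elim
      (auto intro!: unnorm_posterior_differentiable likelihood_differentiable prior_eta_diff prior_rho_diff)
qed

end
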